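(* There is a classical winning strategy for the matching game with parameter $m=4$, and there is also a classical winning strategy for the matching game with parameter $m=6$.
   Context: A perfect matching on $\{0,\ldots,m-1\}$ ($m$ even) is a partition of this set into $m/2$ sets of cardinality 2; $M_m$ denotes the set of all perfect matchings on $\{0,\ldots,m-1\}$. Let $L=\lceil\log_2 m\rceil$. For $n\in\{0,\ldots,m-1\}$, $\bar n\in\{0,1\}^L$ denotes the binary representation of $n$ written with exactly $L$ bits, most significant bit first (padded with leading zeros). On bit strings, $\oplus$ is applied bitwise, and for $u,v\in\{0,1\}^L$, $u\cdot v=\bigoplus_{i}(u_i\wedge v_i)$. The matching game with parameter $m$: Alice receives $x=x_0\cdots x_{m-1}\in\{0,1\}^m$ and outputs $a\in\{0,1\}^L$; Bob receives $y\in M_m$ and outputs a two-element set $\{b_1,b_2\}\subseteq\{0,\ldots,m-1\}$ together with a string $b\in\{0,1\}^L$. They win on question $(x,y)$ iff $\{b_1,b_2\}\in y$ and $x_{b_1}\oplus x_{b_2}=(\bar b_1\oplus\bar b_2)\cdot(a\oplus b)$; every pair $(x,y)\in\{0,1\}^m\times M_m$ is a possible question. The players cannot communicate and share no entanglement. A classical deterministic strategy is a pair of functions $s_A$ (from Alice's inputs to her outputs) and $s_B$ (from Bob's inputs to his outputs); a classical (randomized) strategy is a probability distribution over classical deterministic strategies (shared randomness). A strategy is winning if it wins with certainty on every question. *)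

theory Defs
  imports "HOL-Probability.Probability_Mass_Function"
begin

definition perfect_matching :: "nat \<Rightarrow> nat set set \<Rightarrow> bool" where
  "perfect_matching m y \<longleftrightarrow>
     (\<forall>e\<in>y. e \<subseteq> {..<m} \<and> card e = 2) \<and> \<Union>y = {..<m} \<and>
     (\<forall>e\<in>y. \<forall>f\<in>y. e \<noteq> f \<longrightarrow> e \<inter> f = {})"

definition nbits :: "nat \<Rightarrow> nat" where
  "nbits m = nat \<lceil>log 2 (real m)\<rceil>"

text \<open>Binary representation with exactly L bits, most significant bit first.\<close>
definition bin :: "nat \<Rightarrow> nat \<Rightarrow> bool list" where
  "bin L n = map (\<lambda>i. bit n (L - 1 - i)) [0..<L]"

definition bxor :: "bool list \<Rightarrow> bool list \<Rightarrow> bool list" where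
  "bxor u v = map2 (\<noteq>) u v"

definition bdot :: "bool list \<Rightarrow> bool list \<Rightarrow> bool" where
  "bdot u v = foldr (\<noteq>) (map2 (\<and>) u v) False"

text \<open>Deterministic strategy: Alice maps x (a bool list of length m) to a;
  Bob maps a matching y to (b1, b2, b), where {b1,b2} is his chosen pair.\<close>
type_synonym det_strategy =
  "(bool list \<Rightarrow> bool list) \<times> (nat set set \<Rightarrow> nat \<times> nat \<times> bool list)"

definition wins :: "nat \<Rightarrow> det_strategy \<Rightarrow> bool list \<Rightarrow> nat set set \<Rightarrow> bool" where
  "wins m s x y \<longleftrightarrow>
     (let L = nbits m; a = fst s x; (b1, b2, b) = snd s y in
       length a = L \<and> length b = L \<and> {b1, b2} \<in> y \<and>
       (x ! b1 \<noteq> x ! b2) = bdot (bxor (bin L b1) (bin L b2)) (bxor a b))"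

text \<open>A classical (randomized) strategy is a distribution over deterministic
  strategies; it is winning if it wins with certainty on every question.\<close>
definition classical_winning :: "nat \<Rightarrow> det_strategy pmf \<Rightarrow> bool" where
  "classical_winning m p \<longleftrightarrow>
     (\<forall>x y. length x = m \<and> perfect_matching m y \<longrightarrow>
        measure_pmf.prob p {s. wins m s x y} = 1)"

end

theory Submission
  imports Defs
begin

text \<open>Let \<open>V = {0} \<union> {2^t | t < L}\<close>, whose binary representations are the zero
  vector and the unit vectors. Alice answers the vector \<open>a\<close> with \<open>a\<^sub>k = x\<^sub>0 \<oplus> x\<^sub>v\<close>
  for the unit vector \<open>v\<close> at position \<open>k\<close>, so that \<open>x\<^sub>0 \<oplus> x\<^sub>v = v\<cdot>a\<close> for all
  \<open>v \<in> V\<close>; by linearity of the dot product, \<open>x\<^sub>i \<oplus> x\<^sub>j = (i \<oplus> j)\<cdot>a\<close> for all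
  \<open>i, j \<in> V\<close>. Bob answers a pair of his matching lying inside \<open>V\<close> and \<open>b = 0\<close>.
  Such a pair exists as soon as \<open>|V| = L + 1 > m/2\<close>, which is the case for
  \<open>m = 4\<close> (\<open>L = 2\<close>) and \<open>m = 6\<close> (\<open>L = 3\<close>).\<close>

lemma bdot_Cons [simp]: "bdot (a # u) (c # w) = ((a \<and> c) \<noteq> bdot u w)"
  by (simp add: bdot_def)

lemma bdot_Nil [simp]: "bdot [] w = False" "bdot u [] = False"
  by (simp_all add: bdot_def)

lemma bdot_bxor_left:
  "length u = length v \<Longrightarrow> bdot (bxor u v) w = (bdot u w \<noteq> bdot v w)"
proof (induction u v arbitrary: w rule: list_induct2)
  case (Cons a u b v)
  then show ?case
    by (cases w) (auto simp: bxor_def)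
qed (simp add: bxor_def)

lemma bdot_replicate_False_left [simp]: "bdot (replicate n False) w = False"
proof (induction n arbitrary: w)
  case (Suc n)
  then show ?case
    by (cases w) simp_all
qed simp

lemma bdot_unit_vector:
  "k < length w \<Longrightarrow> bdot (map (\<lambda>i. i = k) [0..<length w]) w = w ! k"
proof (induction w arbitrary: k)
  case (Cons c w)
  show ?case
  proof (cases k)
    case 0
    have "map (\<lambda>i. i = 0) [1..<Suc (length w)] = replicate (length w) False"
      by (simp add: map_Suc_upt[symmetric] comp_def map_replicate_const del: upt_Suc)
    then show ?thesis
      using 0 by (simp add: upt_conv_Cons del: upt_Suc)
  next
    case (Suc k')
    then show ?thesis
      using Cons by (simp add: upt_conv_Cons map_Suc_upt[symmetric] comp_def del: upt_Suc)
  qed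
qed simp

lemma bxor_replicate_False [simp]: "bxor u (replicate (length u) False) = u"
  by (induction u) (simp_all add: bxor_def)

lemma length_bin [simp]: "length (bin L n) = L"
  by (simp add: bin_def)

lemma bin_0 [simp]: "bin L 0 = replicate L False"
  by (simp add: bin_def map_replicate_const)

lemma bin_power_of_two:
  assumes "t < L"
  shows "bin L (2 ^ t) = map (\<lambda>i. i = L - 1 - t) [0..<L]"
  unfolding bin_def using assms by (intro map_cong) (auto simp: bit_exp_iff)

lemma nbits_eq:
  assumes "2 ^ n < m" "m \<le> 2 ^ Suc n"
  shows "nbits m = Suc n"
  using ceiling_log_nat_eq_if[of 2 n m] assms by (simp add: nbits_def)

definition pivots :: "nat \<Rightarrow> nat set" where
  "pivots L = insert 0 ((\<lambda>t. 2 ^ t) ` {..<L})"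

definition pivot_answer :: "nat \<Rightarrow> bool list \<Rightarrow> bool list" where
  "pivot_answer L x = map (\<lambda>i. x ! 0 \<noteq> x ! (2 ^ (L - 1 - i))) [0..<L]"

lemma length_pivot_answer [simp]: "length (pivot_answer L x) = L"
  by (simp add: pivot_answer_def)

lemma bdot_bin_pivot_answer:
  assumes "v \<in> pivots L"
  shows "bdot (bin L v) (pivot_answer L x) = (x ! 0 \<noteq> x ! v)"
  using assms unfolding pivots_def
proof (elim insertE imageE)
  fix t assume v: "v = 2 ^ t" and t: "t \<in> {..<L}"
  then have "bdot (bin L v) (pivot_answer L x) = pivot_answer L x ! (L - 1 - t)"
    using bdot_unit_vector[of "L - 1 - t" "pivot_answer L x"] by (simp add: bin_power_of_two)
  also have "\<dots> = (x ! 0 \<noteq> x ! v)"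
    using v t by (simp add: pivot_answer_def)
  finally show ?thesis .
qed simp

lemma card_pivots: "card (pivots L) = Suc L"
proof -
  have "inj_on (\<lambda>t. (2::nat) ^ t) {..<L}"
    by (simp add: inj_on_def)
  moreover have "0 \<notin> (\<lambda>t. (2::nat) ^ t) ` {..<L}"
    by auto
  ultimately show ?thesis
    by (simp add: pivots_def card_image)
qed

lemma pivots_subset:
  assumes "2 ^ L < 2 * m"
  shows "pivots L \<subseteq> {..<m}"
proof -
  have "2 ^ t < m" if "t < L" for t :: nat
  proof -
    have "(2::nat) ^ Suc t \<le> 2 ^ L"
      using that by (intro power_increasing) auto
    then show ?thesis
      using assms by simp
  qed
  moreover have "0 < m"
    using assms by (cases m) auto
  ultimately show ?thesis by (auto simp: pivots_def)
qed

lemma perfect_matching_cover: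
  assumes "perfect_matching m y" "u < m"
  obtains v where "{u, v} \<in> y" "v \<noteq> u" "v < m"
proof -
  have "u \<in> \<Union>y"
    using assms unfolding perfect_matching_def by simp
  then obtain e where e: "e \<in> y" "u \<in> e"
    by blast
  have "card e = 2" "e \<subseteq> {..<m}"
    using assms(1) e(1) unfolding perfect_matching_def by simp_all
  then obtain a b where "e = {a, b}" "a \<noteq> b"
    by (meson card_2_iff)
  then obtain v where v: "e = {u, v}" "v \<noteq> u"
    using e(2) by auto
  with \<open>e \<subseteq> {..<m}\<close> have "v < m"
    by auto
  with v e(1) show ?thesis
    using that by blast
qed

lemma perfect_matching_partner_unique:
  assumes "perfect_matching m y" "{u, v} \<in> y" "{u, w} \<in> y" "v \<noteq> u" "w \<noteq> u"
  shows "v = w"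
proof -
  have disjoint: "\<forall>e\<in>y. \<forall>f\<in>y. e \<noteq> f \<longrightarrow> e \<inter> f = {}"
    using assms(1) unfolding perfect_matching_def by simp
  have "{u, v} = {u, w}"
  proof (rule ccontr)
    assume "{u, v} \<noteq> {u, w}"
    then have "{u, v} \<inter> {u, w} = {}"
      by (rule disjoint[rule_format, OF assms(2,3)])
    then show False
      by simp
  qed
  then show "v = w"
    using assms(4,5) by (simp add: doubleton_eq_iff)
qed

text \<open>Otherwise the partner map would inject \<open>A\<close> into its complement.\<close>

lemma perfect_matching_pair_within:
  assumes y: "perfect_matching m y" and A: "A \<subseteq> {..<m}" and large: "m < 2 * card A"
  shows "\<exists>i j. {i, j} \<in> y \<and> {i, j} \<subseteq> A"
proof (rule ccontr)
  assume none: "\<not> ?thesis"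
  define p where "p u = (SOME v. {u, v} \<in> y \<and> v \<noteq> u \<and> v < m)" for u
  have p: "{u, p u} \<in> y \<and> p u \<noteq> u \<and> p u < m" if "u < m" for u
    unfolding p_def by (rule someI_ex) (meson perfect_matching_cover[OF y that])
  have "inj_on p A"
  proof (rule inj_onI)
    fix u u' assume "u \<in> A" "u' \<in> A" "p u = p u'"
    moreover have "u < m" "u' < m"
      using calculation A by auto
    ultimately have "{p u, u} \<in> y" "{p u, u'} \<in> y" "u \<noteq> p u" "u' \<noteq> p u"
      using p[of u] p[of u'] by (simp_all add: insert_commute)
    then show "u = u'"
      by (rule perfect_matching_partner_unique[OF y])
  qed
  moreover have "p ` A \<subseteq> {..<m} - A"
  proof
    fix v assume "v \<in> p ` A"
    then obtain u where "u \<in> A" "v = p u"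
      by blast
    moreover have "{u, p u} \<in> y" "p u < m"
      using p[of u] \<open>u \<in> A\<close> A by auto
    ultimately show "v \<in> {..<m} - A"
      using none by blast
  qed
  ultimately have "card A \<le> card ({..<m} - A)"
    by (metis card_image card_mono finite_Diff finite_lessThan)
  also have "\<dots> = m - card A"
    using A by (simp add: card_Diff_subset finite_subset)
  finally show False
    using large by linarith
qed

definition pivot_pair :: "nat \<Rightarrow> nat set set \<Rightarrow> nat \<times> nat" where
  "pivot_pair L y = (SOME (i, j). {i, j} \<in> y \<and> {i, j} \<subseteq> pivots L)"

definition pivot_strategy :: "nat \<Rightarrow> det_strategy" where
  "pivot_strategy L =
     (pivot_answer L, \<lambda>y. (fst (pivot_pair L y), snd (pivot_pair L y), replicate L False))"

lemma wins_pivot_strategy: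
  assumes "nbits m = L" "2 ^ L < 2 * m" "m < 2 * Suc L" "perfect_matching m y"
  shows "wins m (pivot_strategy L) x y"
proof -
  obtain i j where pair: "pivot_pair L y = (i, j)"
    by (rule prod.exhaust)
  have "\<exists>i j. {i, j} \<in> y \<and> {i, j} \<subseteq> pivots L"
    using perfect_matching_pair_within[OF assms(4) pivots_subset[OF assms(2)]] assms(3)
    by (simp add: card_pivots)
  then have "case pivot_pair L y of (i, j) \<Rightarrow> {i, j} \<in> y \<and> {i, j} \<subseteq> pivots L"
    unfolding pivot_pair_def by (intro someI_ex[where P = "\<lambda>(i, j). _ i j"]) auto
  then have edge: "{i, j} \<in> y" and "i \<in> pivots L" "j \<in> pivots L"
    using pair by auto
  then have "(x ! i \<noteq> x ! j) = bdot (bxor (bin L i) (bin L j)) (pivot_answer L x)"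
    by (auto simp: bdot_bxor_left bdot_bin_pivot_answer)
  moreover have "bxor (pivot_answer L x) (replicate L False) = pivot_answer L x"
    using bxor_replicate_False[of "pivot_answer L x"] by simp
  ultimately show ?thesis
    using edge pair assms(1) by (simp add: wins_def pivot_strategy_def Let_def)
qed

lemma classical_winning_pivot_strategy:
  assumes "nbits m = L" "2 ^ L < 2 * m" "m < 2 * Suc L"
  shows "classical_winning m (return_pmf (pivot_strategy L))"
  using wins_pivot_strategy[OF assms] by (simp add: classical_winning_def)

theorem theorem1:
  shows "(\<exists>p. classical_winning 4 p) \<and> (\<exists>p. classical_winning 6 p)"
proof
  have "nbits 4 = 2" "nbits 6 = 3"
    using nbits_eq[of 1 4] nbits_eq[of 2 6] by simp_all
  then show "\<exists>p. classical_winning 4 p" "\<exists>p. classical_winning 6 p"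
    using classical_winning_pivot_strategy[of 4 2] classical_winning_pivot_strategy[of 6 3]
    by auto
qed

end
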